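(* Let $\theta$ be an inner function and let $g\in H^2$. Then for every $f\in H^\infty$, \[ \|P(\bar g\, V_\theta U f)\|=\|P^\perp(\bar{\theta}\, g\, f^* )\|, \] where $f^*(z)=\overline{f(\bar z)}$.
   Context: $L^2$ is the space of square-integrable functions on the unit circle $\mathbb{T}$, $H^2\subset L^2$ the Hardy space, $H^\infty$ the bounded analytic functions; $P$ and $P^\perp$ are the orthogonal projections of $L^2$ onto $H^2$ and onto $L^2\ominus H^2$. An inner function is an analytic $\theta$ on the unit disk with $|\theta|=1$ a.e. on $\mathbb{T}$. $U$ is the unitary operator on $L^2$ given by $(Uh)(z)=\bar z\, h(\bar z)$ for $z\in\mathbb{T}$, and $V_\theta$ is the operator $V_\theta h=P(\theta h)$ for $h\in L^2$. Norms are $L^2$ norms. *)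

theory Defs
  imports "HOL-Complex_Analysis.Complex_Analysis"
begin

definition circle_measure :: "complex measure" where
  "circle_measure = scale_measure (ennreal (1 / (2 * pi)))
     (distr (restrict_space lborel {0..2*pi}) borel (\<lambda>t. cis t))"

definition L2 :: "(complex \<Rightarrow> complex) \<Rightarrow> bool" where
  "L2 h \<longleftrightarrow> h \<in> borel_measurable circle_measure \<and>
            integrable circle_measure (\<lambda>z. (cmod (h z))\<^sup>2)"

definition l2_norm :: "(complex \<Rightarrow> complex) \<Rightarrow> real" where
  "l2_norm h = sqrt (integral\<^sup>L circle_measure (\<lambda>z. (cmod (h z))\<^sup>2))"

definition fcoef :: "(complex \<Rightarrow> complex) \<Rightarrow> int \<Rightarrow> complex" where
  "fcoef h n = integral\<^sup>L circle_measure (\<lambda>z. h z * z powi (- n))"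

definition H2 :: "(complex \<Rightarrow> complex) \<Rightarrow> bool" where
  "H2 h \<longleftrightarrow> L2 h \<and> (\<forall>n<0. fcoef h n = 0)"

definition radial_bv :: "(complex \<Rightarrow> complex) \<Rightarrow> (complex \<Rightarrow> complex) \<Rightarrow> bool" where
  "radial_bv F f \<longleftrightarrow>
     (AE z in circle_measure. ((\<lambda>r::real. F (of_real r * z)) \<longlongrightarrow> f z) (at_left 1))"

definition Hinf :: "(complex \<Rightarrow> complex) \<Rightarrow> bool" where
  "Hinf f \<longleftrightarrow> f \<in> borel_measurable circle_measure \<and>
     (\<exists>F. F holomorphic_on ball 0 1 \<and> bounded (F ` ball 0 1) \<and> radial_bv F f)"

definition inner_fun :: "(complex \<Rightarrow> complex) \<Rightarrow> bool" where
  "inner_fun \<theta> \<longleftrightarrow> Hinf \<theta> \<and> (AE z in circle_measure. cmod (\<theta> z) = 1)"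

text \<open>The projection P onto H2 (Riesz projection): the L2 function whose Fourier coefficients
  are those of h for n \<ge> 0 and 0 for n < 0.  For h in L2 this is the orthogonal projection
  onto H2; it is also applied to integrable h, where it exists iff the truncated coefficient
  sequence is square summable.\<close>
definition P_exists :: "(complex \<Rightarrow> complex) \<Rightarrow> bool" where
  "P_exists h \<longleftrightarrow> (\<exists>p. L2 p \<and> (\<forall>n. fcoef p n = (if 0 \<le> n then fcoef h n else 0)))"

definition Pproj :: "(complex \<Rightarrow> complex) \<Rightarrow> (complex \<Rightarrow> complex)" where
  "Pproj h = (SOME p. L2 p \<and> (\<forall>n. fcoef p n = (if 0 \<le> n then fcoef h n else 0)))"

definition Pperp :: "(complex \<Rightarrow> complex) \<Rightarrow> (complex \<Rightarrow> complex)" where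
  "Pperp h = (\<lambda>z. h z - Pproj h z)"

definition Uop :: "(complex \<Rightarrow> complex) \<Rightarrow> (complex \<Rightarrow> complex)" where
  "Uop h = (\<lambda>z. cnj z * h (cnj z))"

definition Vop :: "(complex \<Rightarrow> complex) \<Rightarrow> (complex \<Rightarrow> complex) \<Rightarrow> (complex \<Rightarrow> complex)" where
  "Vop \<theta> h = Pproj (\<lambda>z. \<theta> z * h z)"

definition fstar :: "(complex \<Rightarrow> complex) \<Rightarrow> (complex \<Rightarrow> complex)" where
  "fstar f = (\<lambda>z. cnj (f (cnj z)))"

end

theory Submission
  imports Defs "HOL-Probability.Probability_Measure"
begin

text \<open>Put \<open>a = \<theta> \<cdot> U f\<close> and \<open>k = cnj \<theta> \<cdot> g \<cdot> f\<^sup>*\<close>; on the circle \<open>a \<cdot> cnj g = cnj z \<cdot> cnj k\<close>.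
  For \<open>n \<ge> 0\<close> the \<open>n\<close>-th Fourier coefficient of \<open>cnj g \<cdot> P a\<close> is \<open>\<langle>P a, g z\<^sup>n\<rangle> = \<langle>a, g z\<^sup>n\<rangle>\<close>,
  since \<open>P a - a\<close> has no nonnegative frequencies while \<open>g z\<^sup>n \<in> H\<^sup>2\<close>; and \<open>\<langle>a, g z\<^sup>n\<rangle>\<close> is the
  conjugate of the \<open>(-n-1)\<close>-th coefficient of \<open>k\<close>.  Hence \<open>cnj z \<cdot> cnj (P\<^sup>\<bottom> k)\<close>, which has
  the same modulus as \<open>P\<^sup>\<bottom> k\<close>, has exactly the Fourier coefficients of \<open>P (cnj g \<cdot> P a)\<close>.
  A square-integrable function is determined by its Fourier coefficients (by Stone-Weierstrass,
  trigonometric polynomials are uniformly dense in the continuous functions on the circle), so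
  the two norms agree.\<close>

section \<open>The normalised measure on the unit circle\<close>

lemma sets_circle_measure [measurable_cong, simp]: "sets circle_measure = sets borel"
  by (simp add: circle_measure_def)

lemma space_circle_measure [simp]: "space circle_measure = UNIV"
  using sets_eq_imp_space_eq[OF sets_circle_measure] by simp

lemma borel_measurable_circle_measure_iff [simp]:
  "f \<in> borel_measurable circle_measure \<longleftrightarrow> f \<in> borel_measurable borel"
  by (simp add: measurable_cong_sets[OF sets_circle_measure refl])

lemma borel_measurable_cis [measurable]: "cis \<in> borel_measurable borel"
  by (rule borel_measurable_continuous_onI) (simp add: cis_conv_exp continuous_intros)

lemma borel_measurable_cnj [measurable]: "cnj \<in> borel_measurable borel"
  by (rule borel_measurable_continuous_onI) (intro continuous_intros)

lemma borel_measurable_power_int [measurable]: "(\<lambda>z::complex. z powi n) \<in> borel_measurable borel"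
  by (rule borel_measurable_continuous_countable_exceptions[where X="{0}"])
     (auto intro!: continuous_intros)

lemma emeasure_circle_measure:
  assumes [measurable]: "A \<in> sets borel"
  shows "emeasure circle_measure A = ennreal (1/(2*pi)) * emeasure lborel ({0..2*pi} \<inter> cis -` A)"
proof -
  have [measurable]: "cis \<in> restrict_space lborel {0..2*pi} \<rightarrow>\<^sub>M borel"
    by (rule measurable_restrict_space1) simp
  have "cis -` A \<inter> space (restrict_space lborel {0..2*pi}) = {0..2*pi} \<inter> cis -` A"
    by auto
  then show ?thesis
    unfolding circle_measure_def by (simp add: emeasure_distr emeasure_restrict_space)
qed

interpretation circle: prob_space circle_measure
proof
  have "emeasure circle_measure UNIV = ennreal (1/(2*pi)) * emeasure lborel {0..2*pi}"
    by (subst emeasure_circle_measure) auto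
  also have "\<dots> = 1" by (simp add: ennreal_mult[symmetric])
  finally show "emeasure circle_measure (space circle_measure) = 1" by simp
qed

lemma AE_circle_measure_norm: "AE z in circle_measure. cmod z = 1"
  by (rule AE_I[where N="{z. cmod z \<noteq> 1}"]) (auto simp: emeasure_circle_measure)

lemma AE_circle_measure_nonzero: "AE z in circle_measure. z \<noteq> 0"
  using AE_circle_measure_norm by eventually_elim auto

lemma cnj_power_int_circle: "cmod z = 1 \<Longrightarrow> cnj z powi n = z powi (-n)"
proof -
  assume "cmod z = 1"
  then have "cnj z = inverse z"
    using complex_norm_square[of z] by (metis inverse_unique of_real_1 power_one)
  then show ?thesis
    by (simp add: power_int_inverse power_int_minus)
qed

lemma integral_circle_measure:
  fixes g :: "complex \<Rightarrow> 'b::{banach, second_countable_topology}"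
  assumes [measurable]: "g \<in> borel_measurable borel"
  shows "integral\<^sup>L circle_measure g = (1/(2*pi)) *\<^sub>R (LBINT t:{0..2*pi}. g (cis t))"
proof -
  let ?M = "distr (restrict_space lborel {0..2*pi}) borel cis"
  have [measurable]: "cis \<in> borel_measurable (restrict_space lborel {0..2*pi})"
    by (rule measurable_restrict_space1) simp
  have density: "circle_measure = density ?M (\<lambda>_. ennreal (1/(2*pi)))"
    by (rule measure_eqI) (simp_all add: circle_measure_def emeasure_density nn_integral_cmult_indicator)
  have "integral\<^sup>L circle_measure g = integral\<^sup>L ?M (\<lambda>z. (1/(2*pi)) *\<^sub>R g z)"
    by (subst density, subst integral_density) auto
  also have "\<dots> = integral\<^sup>L (restrict_space lborel {0..2*pi}) (\<lambda>t. (1/(2*pi)) *\<^sub>R g (cis t))"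
    by (subst integral_distr) auto
  also have "\<dots> = integral\<^sup>L lborel (\<lambda>t. indicator {0..2*pi} t *\<^sub>R ((1/(2*pi)) *\<^sub>R g (cis t)))"
    by (subst integral_restrict_space) auto
  also have "\<dots> = (1/(2*pi)) *\<^sub>R (LBINT t:{0..2*pi}. g (cis t))"
    unfolding set_lebesgue_integral_def
    by (subst integral_scaleR_right[symmetric]) (simp add: scaleR_left_commute)
  finally show ?thesis .
qed

lemma integral_circle_measure_power_int:
  "integral\<^sup>L circle_measure (\<lambda>z. z powi n) = (if n = 0 then 1 else 0)"
proof (cases "n = 0")
  case False
  let ?F = "\<lambda>t. cis (of_int n * t) / (\<i> * of_int n)"
  have "(LBINT t=ereal 0..ereal (2*pi). cis (of_int n * t)) = ?F (2*pi) - ?F 0"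
  proof (rule interval_integral_FTC_finite)
    show "continuous_on {min 0 (2*pi)..max 0 (2*pi)} (\<lambda>t. cis (real_of_int n * t))"
      by (intro continuous_intros)
    show "(?F has_vector_derivative cis (real_of_int n * t)) (at t within {min 0 (2*pi)..max 0 (2*pi)})" for t
      unfolding has_vector_derivative_def
      by (rule derivative_eq_intros refl | simp)+
         (use False in \<open>auto simp: fun_eq_iff scaleR_conv_of_real field_simps\<close>)
  qed
  also have "?F (2*pi) - ?F 0 = 0"
    using cis_multiple_2pi[of "of_int n"] by (simp add: mult.commute)
  finally have "(LBINT t:{0..2*pi}. (cis t) powi n) = 0"
    using interval_integral_Icc[of 0 "2*pi" "\<lambda>t. cis (of_int n * t)"] by (simp add: cis_power_int)
  then show ?thesis using False by (simp add: integral_circle_measure)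
qed (use circle.prob_space in simp)

lemma integral_circle_measure_power_int_mult:
  "integral\<^sup>L circle_measure (\<lambda>z. z powi n * z powi m) = (if n + m = 0 then 1 else 0)"
proof -
  have "integral\<^sup>L circle_measure (\<lambda>z. z powi n * z powi m) = integral\<^sup>L circle_measure (\<lambda>z. z powi (n + m))"
    by (rule integral_cong_AE)
       (use AE_circle_measure_nonzero in \<open>auto simp: power_int_add elim!: eventually_mono\<close>)
  then show ?thesis by (simp add: integral_circle_measure_power_int)
qed

text \<open>The reflection \<open>t \<mapsto> 2\<pi> - t\<close> of the parameter interval realises complex conjugation.\<close>
lemma emeasure_circle_measure_vimage_cnj:
  assumes [measurable]: "A \<in> sets borel"
  shows "emeasure circle_measure (cnj -` A) = emeasure circle_measure A"
proof -
  have "lborel = density (distr lborel borel (\<lambda>x::real. 2*pi + (-1) * x)) (\<lambda>_. ennreal \<bar>-1\<bar>)"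
    by (rule lborel_real_affine) simp
  then have reflect: "lborel = distr lborel borel (\<lambda>x::real. 2*pi - x)"
    by (simp add: density_1)
  have "cis (2*pi - t) = cis (-t)" for t
    by (simp add: complex_eq_iff cos_diff sin_diff)
  then have "(\<lambda>x::real. 2*pi - x) -` ({0..2*pi} \<inter> cis -` A) = {0..2*pi} \<inter> cis -` (cnj -` A)"
    by (auto simp: cis_cnj)
  then have "emeasure lborel ({0..2*pi} \<inter> cis -` A) = emeasure lborel ({0..2*pi} \<inter> cis -` (cnj -` A))"
    by (subst reflect) (simp add: emeasure_distr)
  moreover have "cnj -` A \<in> sets borel"
    using measurable_sets_borel[OF borel_measurable_cnj assms] by simp
  ultimately show ?thesis
    by (simp add: emeasure_circle_measure)
qed

lemma AE_circle_measure_cnj: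
  assumes "AE z in circle_measure. P z"
  shows "AE z in circle_measure. P (cnj z)"
proof -
  from assms obtain N where N: "{z. \<not> P z} \<subseteq> N" "emeasure circle_measure N = 0" "N \<in> sets borel"
    by (force elim: AE_E)
  have "cnj -` N \<in> sets borel"
    using measurable_sets_borel[OF borel_measurable_cnj N(3)] by simp
  with N show ?thesis
    by (intro AE_I[where N="cnj -` N"]) (auto simp: emeasure_circle_measure_vimage_cnj)
qed

section \<open>Square-integrable functions\<close>

lemma L2_iff: "L2 h \<longleftrightarrow> h \<in> borel_measurable borel \<and> integrable circle_measure (\<lambda>z. (cmod (h z))\<^sup>2)"
  by (simp add: L2_def)

lemma L2_borel_measurable: "L2 h \<Longrightarrow> h \<in> borel_measurable borel"
  by (simp add: L2_iff)

lemma L2_integrable_power2: "L2 h \<Longrightarrow> integrable circle_measure (\<lambda>z. (cmod (h z))\<^sup>2)"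
  by (simp add: L2_iff)

lemma L2I: "h \<in> borel_measurable borel \<Longrightarrow> integrable circle_measure (\<lambda>z. (cmod (h z))\<^sup>2) \<Longrightarrow> L2 h"
  by (simp add: L2_iff)

lemma integrable_mult_L2:
  assumes "L2 a" "L2 b"
  shows "integrable circle_measure (\<lambda>z. a z * b z)"
proof (rule Bochner_Integration.integrable_bound)
  show "integrable circle_measure (\<lambda>z. (cmod (a z))\<^sup>2 + (cmod (b z))\<^sup>2)"
    using assms by (simp add: L2_integrable_power2)
  show "(\<lambda>z. a z * b z) \<in> borel_measurable circle_measure"
    using assms by (simp add: L2_borel_measurable borel_measurable_times)
  have "cmod (a z) * cmod (b z) \<le> (cmod (a z))\<^sup>2 + (cmod (b z))\<^sup>2" for z
  proof -
    have "0 \<le> (cmod (a z) - cmod (b z))\<^sup>2" "0 \<le> cmod (a z) * cmod (b z)" by simp_all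
    then show ?thesis unfolding power2_diff by linarith
  qed
  then show "AE z in circle_measure. norm (a z * b z) \<le> norm ((cmod (a z))\<^sup>2 + (cmod (b z))\<^sup>2)"
    by (simp add: norm_mult)
qed

lemma L2_mult_bounded:
  assumes "L2 a" and [measurable]: "g \<in> borel_measurable borel"
    and "AE z in circle_measure. cmod (g z) \<le> B"
  shows "L2 (\<lambda>z. g z * a z)"
proof (rule L2I)
  have [measurable]: "a \<in> borel_measurable borel"
    using assms by (simp add: L2_borel_measurable)
  show "(\<lambda>z. g z * a z) \<in> borel_measurable borel" by measurable
  show "integrable circle_measure (\<lambda>z. (cmod (g z * a z))\<^sup>2)"
  proof (rule Bochner_Integration.integrable_bound)
    show "integrable circle_measure (\<lambda>z. B\<^sup>2 * (cmod (a z))\<^sup>2)"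
      using assms by (simp add: L2_integrable_power2)
    show "AE z in circle_measure. norm ((cmod (g z * a z))\<^sup>2) \<le> norm (B\<^sup>2 * (cmod (a z))\<^sup>2)"
      using assms(3)
    proof eventually_elim
      case (elim z)
      then have "(cmod (g z))\<^sup>2 * (cmod (a z))\<^sup>2 \<le> B\<^sup>2 * (cmod (a z))\<^sup>2"
        by (intro mult_right_mono power_mono) auto
      then show ?case by (simp add: norm_mult power_mult_distrib)
    qed
  qed simp
qed

lemma L2_const: "L2 (\<lambda>z. c)"
  by (rule L2I) auto

lemma L2_bounded:
  assumes "g \<in> borel_measurable borel" and "AE z in circle_measure. cmod (g z) \<le> B"
  shows "L2 g"
  using L2_mult_bounded[OF L2_const[of 1] assms] by simp

lemma L2_integrable: "L2 a \<Longrightarrow> integrable circle_measure a"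
  using integrable_mult_L2[OF _ L2_const[of 1], of a] by simp

lemma L2_cmult: "L2 a \<Longrightarrow> L2 (\<lambda>z. c * a z)"
  by (rule L2_mult_bounded[where B="cmod c"]) auto

lemma L2_add:
  assumes "L2 a" "L2 b"
  shows "L2 (\<lambda>z. a z + b z)"
proof (rule L2I)
  have [measurable]: "a \<in> borel_measurable borel" "b \<in> borel_measurable borel"
    using assms by (auto simp: L2_borel_measurable)
  show "(\<lambda>z. a z + b z) \<in> borel_measurable borel" by measurable
  show "integrable circle_measure (\<lambda>z. (cmod (a z + b z))\<^sup>2)"
  proof (rule Bochner_Integration.integrable_bound)
    show "integrable circle_measure (\<lambda>z. 2 * (cmod (a z))\<^sup>2 + 2 * (cmod (b z))\<^sup>2)"
      using assms by (simp add: L2_integrable_power2)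
    have "(cmod (u + v))\<^sup>2 \<le> 2 * (cmod u)\<^sup>2 + 2 * (cmod v)\<^sup>2" for u v :: complex
    proof -
      have "(cmod (u + v))\<^sup>2 \<le> (cmod u + cmod v)\<^sup>2"
        by (intro power_mono norm_triangle_ineq) auto
      also have "\<dots> \<le> 2 * (cmod u)\<^sup>2 + 2 * (cmod v)\<^sup>2"
        using sum_squares_ge_zero[of "cmod u - cmod v" 0] by (simp add: power2_eq_square algebra_simps)
      finally show ?thesis .
    qed
    then show "AE z in circle_measure. norm ((cmod (a z + b z))\<^sup>2) \<le> norm (2 * (cmod (a z))\<^sup>2 + 2 * (cmod (b z))\<^sup>2)"
      by simp
  qed simp
qed

lemma L2_diff: "L2 a \<Longrightarrow> L2 b \<Longrightarrow> L2 (\<lambda>z. a z - b z)"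
  using L2_add[of a "\<lambda>z. -1 * b z"] L2_cmult[of b "-1"] by simp

lemma L2_cnj: "L2 a \<Longrightarrow> L2 (\<lambda>z. cnj (a z))"
  by (rule L2I) (auto simp: L2_integrable_power2 dest: L2_borel_measurable)

lemma L2_power_int: "L2 (\<lambda>z. z powi n)"
  by (rule L2_bounded[where B=1])
     (use AE_circle_measure_norm in \<open>auto simp: norm_power_int elim!: eventually_mono\<close>)

lemma L2_mult_power_int:
  assumes "L2 g"
  shows "L2 (\<lambda>z. g z * z powi n)"
proof -
  have "AE z in circle_measure. cmod (z powi n) \<le> 1"
    using AE_circle_measure_norm by eventually_elim (simp add: norm_power_int)
  from L2_mult_bounded[OF assms _ this] show ?thesis
    by (simp add: mult.commute)
qed

lemma L2_sum: "(\<And>n. n \<in> F \<Longrightarrow> L2 (f n)) \<Longrightarrow> L2 (\<lambda>z. \<Sum>n\<in>F. f n z)"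
  by (induction F rule: infinite_finite_induct) (simp_all add: L2_const L2_add)

lemma integrable_fcoef: "L2 a \<Longrightarrow> integrable circle_measure (\<lambda>z. a z * z powi n)"
  by (intro integrable_mult_L2 L2_power_int)

lemma fcoef_diff: "L2 a \<Longrightarrow> L2 b \<Longrightarrow> fcoef (\<lambda>z. a z - b z) n = fcoef a n - fcoef b n"
  unfolding fcoef_def by (simp add: left_diff_distrib integrable_fcoef)

lemma fcoef_mult_power_int:
  assumes "L2 g"
  shows "fcoef (\<lambda>z. g z * z powi n) m = fcoef g (m - n)"
proof -
  have [measurable]: "g \<in> borel_measurable borel"
    using assms by (rule L2_borel_measurable)
  show ?thesis
    unfolding fcoef_def
    by (rule integral_cong_AE)
       (use AE_circle_measure_nonzero in \<open>auto simp: mult.assoc power_int_diff power_int_minus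
          field_simps elim!: eventually_mono\<close>)
qed

section \<open>Norm, inner product and Bessel's inequality\<close>

definition l2_sqnorm :: "(complex \<Rightarrow> complex) \<Rightarrow> real" where
  "l2_sqnorm h = integral\<^sup>L circle_measure (\<lambda>z. (cmod (h z))\<^sup>2)"

lemma l2_sqnorm_nonneg: "0 \<le> l2_sqnorm h"
  unfolding l2_sqnorm_def by (rule integral_nonneg_AE) auto

lemma l2_norm_eq_sqrt: "l2_norm h = sqrt (l2_sqnorm h)"
  by (simp add: l2_norm_def l2_sqnorm_def)

lemma l2_norm_cnj: "l2_norm (\<lambda>z. cnj (h z)) = l2_norm h"
  by (simp add: l2_norm_def)

lemma nn_integral_L2:
  "L2 h \<Longrightarrow> (\<integral>\<^sup>+z. ennreal ((cmod (h z))\<^sup>2) \<partial>circle_measure) = ennreal (l2_sqnorm h)"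
  unfolding l2_sqnorm_def by (rule nn_integral_eq_integral) (auto simp: L2_integrable_power2)

lemma l2_sqnorm_commute: "l2_sqnorm (\<lambda>z. a z - b z) = l2_sqnorm (\<lambda>z. b z - a z)"
  unfolding l2_sqnorm_def by (simp add: norm_minus_commute)

lemma l2_sqnorm_cong_AE:
  assumes "AE z in circle_measure. cmod (a z) = cmod (b z)" "L2 a" "L2 b"
  shows "l2_sqnorm a = l2_sqnorm b"
proof -
  have [measurable]: "a \<in> borel_measurable borel" "b \<in> borel_measurable borel"
    using assms by (auto simp: L2_borel_measurable)
  show ?thesis
    unfolding l2_sqnorm_def by (rule integral_cong_AE) (use assms(1) in \<open>auto elim!: eventually_mono\<close>)
qed

lemma integral_norm_mult_le:
  assumes "L2 a" "L2 b"
  shows "integral\<^sup>L circle_measure (\<lambda>z. cmod (a z) * cmod (b z)) \<le> l2_norm a * l2_norm b"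
proof -
  have [measurable]: "a \<in> borel_measurable borel" "b \<in> borel_measurable borel"
    using assms by (auto simp: L2_borel_measurable)
  let ?I = "integral\<^sup>L circle_measure (\<lambda>z. cmod (a z) * cmod (b z))"
  have int: "integrable circle_measure (\<lambda>z. cmod (a z) * cmod (b z))"
    using integrable_mult_L2[OF assms] by (simp add: norm_mult[symmetric])
  have "(\<integral>\<^sup>+z. ennreal (cmod (a z)) * ennreal (cmod (b z)) \<partial>circle_measure)\<^sup>2 \<le>
        (\<integral>\<^sup>+z. ennreal (cmod (a z)) ^ 2 \<partial>circle_measure) * (\<integral>\<^sup>+z. ennreal (cmod (b z)) ^ 2 \<partial>circle_measure)"
    by (rule Cauchy_Schwarz_nn_integral) auto
  also have "(\<integral>\<^sup>+z. ennreal (cmod (a z)) * ennreal (cmod (b z)) \<partial>circle_measure) = ennreal ?I"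
    by (subst ennreal_mult'[symmetric]) (auto intro!: nn_integral_eq_integral int)
  finally have "?I\<^sup>2 \<le> l2_sqnorm a * l2_sqnorm b"
    using nn_integral_L2[OF assms(1)] nn_integral_L2[OF assms(2)]
    by (simp add: ennreal_power ennreal_mult'[symmetric] l2_sqnorm_nonneg integral_nonneg_AE)
  then have "sqrt (?I\<^sup>2) \<le> sqrt (l2_sqnorm a * l2_sqnorm b)"
    by (rule real_sqrt_le_mono)
  then show ?thesis
    by (simp add: real_sqrt_mult integral_nonneg_AE l2_norm_eq_sqrt)
qed

lemma norm_integral_mult_le:
  assumes "L2 a" "L2 b"
  shows "cmod (integral\<^sup>L circle_measure (\<lambda>z. a z * b z)) \<le> l2_norm a * l2_norm b"
proof -
  have "cmod (integral\<^sup>L circle_measure (\<lambda>z. a z * b z)) \<le> integral\<^sup>L circle_measure (\<lambda>z. cmod (a z * b z))"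
    by (rule integral_norm_bound)
  also have "\<dots> \<le> l2_norm a * l2_norm b"
    using integral_norm_mult_le[OF assms] by (simp add: norm_mult)
  finally show ?thesis .
qed

lemma integral_norm_le_l2_norm: "L2 a \<Longrightarrow> integral\<^sup>L circle_measure (\<lambda>z. cmod (a z)) \<le> l2_norm a"
  using integral_norm_mult_le[OF _ L2_const[of 1], of a] circle.prob_space
  by (simp add: l2_norm_def)

lemma l2_norm_power_int: "l2_norm (\<lambda>z. z powi n) = 1"
proof -
  have "l2_sqnorm (\<lambda>z. z powi n) = l2_sqnorm (\<lambda>z. 1)"
    by (rule l2_sqnorm_cong_AE)
       (use AE_circle_measure_norm in \<open>auto simp: norm_power_int L2_power_int L2_const elim!: eventually_mono\<close>)
  then show ?thesis
    using circle.prob_space by (simp add: l2_norm_eq_sqrt l2_sqnorm_def)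
qed

lemma norm_fcoef_le: "L2 a \<Longrightarrow> cmod (fcoef a n) \<le> l2_norm a"
  using norm_integral_mult_le[OF _ L2_power_int, of a "-n"]
  by (simp add: fcoef_def l2_norm_power_int)

definition l2_inner :: "(complex \<Rightarrow> complex) \<Rightarrow> (complex \<Rightarrow> complex) \<Rightarrow> complex" where
  "l2_inner a b = integral\<^sup>L circle_measure (\<lambda>z. a z * cnj (b z))"

lemma l2_inner_self: "l2_inner a a = of_real (l2_sqnorm a)"
  unfolding l2_inner_def l2_sqnorm_def complex_norm_square[symmetric] by (rule integral_complex_of_real)

lemma l2_inner_commute: "l2_inner b a = cnj (l2_inner a b)"
  unfolding l2_inner_def Bochner_Integration.integral_cnj[symmetric] by (simp add: mult.commute)

lemma l2_inner_diff_left: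
  "L2 a \<Longrightarrow> L2 b \<Longrightarrow> L2 c \<Longrightarrow> l2_inner (\<lambda>z. a z - b z) c = l2_inner a c - l2_inner b c"
  unfolding l2_inner_def by (simp add: left_diff_distrib integrable_mult_L2 L2_cnj)

lemma l2_inner_diff_right:
  "L2 a \<Longrightarrow> L2 b \<Longrightarrow> L2 c \<Longrightarrow> l2_inner c (\<lambda>z. a z - b z) = l2_inner c a - l2_inner c b"
  by (metis l2_inner_commute l2_inner_diff_left complex_cnj_diff)

lemma l2_inner_power_int:
  assumes "L2 a"
  shows "l2_inner a (\<lambda>z. z powi n) = fcoef a n"
proof -
  have [measurable]: "a \<in> borel_measurable borel"
    using assms by (rule L2_borel_measurable)
  show ?thesis
    unfolding l2_inner_def fcoef_def
    by (rule integral_cong_AE)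
       (use AE_circle_measure_norm in \<open>auto simp: cnj_power_int_circle elim!: eventually_mono\<close>)
qed

definition trig_poly :: "(int \<Rightarrow> complex) \<Rightarrow> int set \<Rightarrow> complex \<Rightarrow> complex" where
  "trig_poly c F = (\<lambda>z. \<Sum>n\<in>F. c n * z powi n)"

lemma borel_measurable_trig_poly [measurable]: "trig_poly c F \<in> borel_measurable borel"
  unfolding trig_poly_def by measurable

lemma L2_trig_poly: "L2 (trig_poly c F)"
  unfolding trig_poly_def by (intro L2_sum L2_cmult L2_power_int)

lemma l2_inner_trig_poly:
  assumes "L2 a"
  shows "l2_inner a (trig_poly c F) = (\<Sum>n\<in>F. cnj (c n) * fcoef a n)"
proof -
  have "l2_inner a (trig_poly c F) =
    integral\<^sup>L circle_measure (\<lambda>z. \<Sum>n\<in>F. cnj (c n) * (a z * cnj (z powi n)))"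
    unfolding l2_inner_def trig_poly_def by (simp add: sum_distrib_left mult_ac)
  also have "\<dots> = (\<Sum>n\<in>F. cnj (c n) * l2_inner a (\<lambda>z. z powi n))"
    unfolding l2_inner_def
    by (subst Bochner_Integration.integral_sum)
       (intro integrable_mult_right integrable_mult_L2 assms L2_cnj L2_power_int, simp)
  finally show ?thesis by (simp add: l2_inner_power_int assms)
qed

lemma fcoef_trig_poly: "finite F \<Longrightarrow> fcoef (trig_poly c F) m = (if m \<in> F then c m else 0)"
proof -
  assume F: "finite F"
  have "fcoef (trig_poly c F) m =
    integral\<^sup>L circle_measure (\<lambda>z. \<Sum>n\<in>F. c n * (z powi n * z powi (-m)))"
    unfolding fcoef_def trig_poly_def by (simp add: sum_distrib_right mult.assoc)
  also have "\<dots> = (\<Sum>n\<in>F. c n * integral\<^sup>L circle_measure (\<lambda>z. z powi n * z powi (-m)))"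
    by (subst Bochner_Integration.integral_sum)
       (auto intro!: integrable_mult_right integrable_mult_L2 L2_power_int)
  also have "\<dots> = (\<Sum>n\<in>F. if n = m then c n else 0)"
    by (intro sum.cong) (auto simp: integral_circle_measure_power_int_mult)
  finally show ?thesis
    using F by (simp add: sum.delta')
qed

lemma l2_inner_trig_poly_self:
  "finite F \<Longrightarrow> l2_inner (trig_poly c F) (trig_poly c F) = (\<Sum>n\<in>F. of_real ((cmod (c n))\<^sup>2))"
  using complex_norm_square
  by (simp add: l2_inner_trig_poly L2_trig_poly fcoef_trig_poly mult.commute)

lemma l2_sqnorm_trig_poly:
  assumes "finite F"
  shows "l2_sqnorm (trig_poly c F) = (\<Sum>n\<in>F. (cmod (c n))\<^sup>2)"
proof -
  have "complex_of_real (l2_sqnorm (trig_poly c F)) = of_real (\<Sum>n\<in>F. (cmod (c n))\<^sup>2)"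
    using assms by (simp add: l2_inner_self[symmetric] l2_inner_trig_poly_self)
  then show ?thesis by (simp only: of_real_eq_iff)
qed

lemma bessel_inequality:
  assumes h: "L2 h" and F: "finite F"
  shows "(\<Sum>n\<in>F. (cmod (fcoef h n))\<^sup>2) \<le> l2_sqnorm h"
proof -
  let ?S = "trig_poly (fcoef h) F" and ?s = "\<Sum>n\<in>F. of_real ((cmod (fcoef h n))\<^sup>2) :: complex"
  have S: "L2 ?S" by (rule L2_trig_poly)
  have hS: "l2_inner h ?S = ?s"
    using h complex_norm_square by (simp add: l2_inner_trig_poly mult.commute)
  have Sh: "l2_inner ?S h = ?s"
    by (subst l2_inner_commute) (simp add: hS)
  have "of_real (l2_sqnorm (\<lambda>z. h z - ?S z)) = l2_inner (\<lambda>z. h z - ?S z) (\<lambda>z. h z - ?S z)"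
    by (rule l2_inner_self[symmetric])
  also have "\<dots> = l2_inner h h - l2_inner h ?S - (l2_inner ?S h - l2_inner ?S ?S)"
    using h S by (simp add: l2_inner_diff_left l2_inner_diff_right L2_diff)
  also have "\<dots> = of_real (l2_sqnorm h - (\<Sum>n\<in>F. (cmod (fcoef h n))\<^sup>2))"
    using F by (simp add: hS Sh l2_inner_trig_poly_self l2_inner_self[symmetric])
  finally show ?thesis
    using l2_sqnorm_nonneg[of "\<lambda>z. h z - ?S z"] by (simp only: of_real_eq_iff)
qed

section \<open>Completeness and the Riesz projection\<close>

lemma nn_integral_sqnorm_limit_le:
  assumes s: "\<And>i. L2 (s i)" and q: "L2 q"
    and lim: "AE z in circle_measure. (\<lambda>i. s i z) \<longlonglongrightarrow> p z"
    and bound: "eventually (\<lambda>i. l2_sqnorm (\<lambda>z. q z - s i z) \<le> e) sequentially"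
  shows "(\<integral>\<^sup>+z. ennreal ((cmod (q z - p z))\<^sup>2) \<partial>circle_measure) \<le> ennreal e"
proof -
  have [measurable]: "s i \<in> borel_measurable borel" "q \<in> borel_measurable borel" for i
    using s q by (auto simp: L2_borel_measurable)
  have "(\<integral>\<^sup>+z. ennreal ((cmod (q z - p z))\<^sup>2) \<partial>circle_measure) =
        (\<integral>\<^sup>+z. liminf (\<lambda>i. ennreal ((cmod (q z - s i z))\<^sup>2)) \<partial>circle_measure)"
  proof (rule nn_integral_cong_AE)
    show "AE z in circle_measure. ennreal ((cmod (q z - p z))\<^sup>2) = liminf (\<lambda>i. ennreal ((cmod (q z - s i z))\<^sup>2))"
      using lim
    proof eventually_elim
      case (elim z)
      have "(\<lambda>i. ennreal ((cmod (q z - s i z))\<^sup>2)) \<longlonglongrightarrow> ennreal ((cmod (q z - p z))\<^sup>2)"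
        by (intro tendsto_intros elim)
      from lim_imp_Liminf[OF trivial_limit_sequentially this] show ?case by simp
    qed
  qed
  also have "\<dots> \<le> liminf (\<lambda>i. \<integral>\<^sup>+z. ennreal ((cmod (q z - s i z))\<^sup>2) \<partial>circle_measure)"
    by (rule nn_integral_liminf) measurable
  also have "\<dots> = liminf (\<lambda>i. ennreal (l2_sqnorm (\<lambda>z. q z - s i z)))"
    by (simp add: nn_integral_L2 L2_diff s q)
  also have "\<dots> \<le> ennreal e"
    using bound by (intro Liminf_le) (auto elim!: eventually_mono intro: ennreal_leI)
  finally show ?thesis .
qed

lemma L1_Cauchy_if_L2_Cauchy:
  assumes s: "\<And>n. L2 (s n)"
    and cauchy: "\<And>e. e > 0 \<Longrightarrow> \<exists>N. \<forall>i\<ge>N. \<forall>j\<ge>N. l2_sqnorm (\<lambda>z. s i z - s j z) < e"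
    and "e > 0"
  shows "\<exists>N. \<forall>i\<ge>N. \<forall>j\<ge>N. (LINT z|circle_measure. norm (s i z - s j z)) < e"
proof -
  obtain N where N: "\<forall>i\<ge>N. \<forall>j\<ge>N. l2_sqnorm (\<lambda>z. s i z - s j z) < e\<^sup>2"
    using cauchy[of "e\<^sup>2"] \<open>e > 0\<close> by auto
  have "(LINT z|circle_measure. norm (s i z - s j z)) < e" if "i \<ge> N" "j \<ge> N" for i j
  proof -
    have "(LINT z|circle_measure. norm (s i z - s j z)) \<le> sqrt (l2_sqnorm (\<lambda>z. s i z - s j z))"
      using integral_norm_le_l2_norm[OF L2_diff[OF s s]] by (simp add: l2_norm_eq_sqrt)
    also have "\<dots> < sqrt (e\<^sup>2)"
      using N that by (intro real_sqrt_less_mono) auto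
    finally show ?thesis using \<open>e > 0\<close> by simp
  qed
  then show ?thesis by blast
qed

lemma L2_complete:
  assumes s: "\<And>n. L2 (s n)"
    and cauchy: "\<And>e. e > 0 \<Longrightarrow> \<exists>N. \<forall>i\<ge>N. \<forall>j\<ge>N. l2_sqnorm (\<lambda>z. s i z - s j z) < e"
  obtains p where "L2 p" "(\<lambda>n. l2_sqnorm (\<lambda>z. s n z - p z)) \<longlonglongrightarrow> 0"
proof -
  have [measurable]: "s n \<in> borel_measurable borel" for n
    using s by (rule L2_borel_measurable)
  obtain r where r: "strict_mono r" and "AE z in circle_measure. Cauchy (\<lambda>i. s (r i) z)"
    using cauchy_L1_AE_cauchy_subseq[OF L2_integrable[OF s] L1_Cauchy_if_L2_Cauchy[OF s cauchy]]
    by blast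
  then have lim: "AE z in circle_measure. (\<lambda>i. s (r i) z) \<longlonglongrightarrow> lim (\<lambda>i. s (r i) z)"
    by (auto simp: Cauchy_convergent_iff convergent_LIMSEQ_iff elim!: eventually_mono)
  define p where "p z = lim (\<lambda>i. s (r i) z)" for z
  have [measurable]: "p \<in> borel_measurable borel"
    unfolding p_def by measurable
  have close: "(\<integral>\<^sup>+z. ennreal ((cmod (s n z - p z))\<^sup>2) \<partial>circle_measure) \<le> ennreal e"
    if "\<forall>i\<ge>N. \<forall>j\<ge>N. l2_sqnorm (\<lambda>z. s i z - s j z) < e" "n \<ge> N" for e N n
  proof (rule nn_integral_sqnorm_limit_le[OF s s])
    show "AE z in circle_measure. (\<lambda>i. s (r i) z) \<longlonglongrightarrow> p z"
      using lim by (simp add: p_def)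
    show "eventually (\<lambda>i. l2_sqnorm (\<lambda>z. s n z - s (r i) z) \<le> e) sequentially"
      using that seq_suble[OF r]
      by (intro eventually_sequentiallyI[of N]) (metis less_imp_le order_trans)
  qed
  obtain N1 where N1: "\<forall>i\<ge>N1. \<forall>j\<ge>N1. l2_sqnorm (\<lambda>z. s i z - s j z) < 1"
    using cauchy[of 1] by auto
  have "L2 (\<lambda>z. s N1 z - p z)"
  proof (rule L2I)
    show "integrable circle_measure (\<lambda>z. (cmod (s N1 z - p z))\<^sup>2)"
      using order.strict_trans1[OF close[OF N1 order_refl] ennreal_less_top]
      by (intro integrableI_bounded) auto
  qed measurable
  then have p: "L2 p"
    using L2_diff[OF s[of N1]] by force
  have "(\<lambda>n. l2_sqnorm (\<lambda>z. s n z - p z)) \<longlonglongrightarrow> 0"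
  proof (rule LIMSEQ_I)
    fix e :: real assume "e > 0"
    then obtain N where N: "\<forall>i\<ge>N. \<forall>j\<ge>N. l2_sqnorm (\<lambda>z. s i z - s j z) < e/2"
      using cauchy[of "e/2"] by auto
    have "l2_sqnorm (\<lambda>z. s n z - p z) \<le> e/2" if "n \<ge> N" for n
      using close[OF N that] nn_integral_L2[OF L2_diff[OF s p]] \<open>e > 0\<close> by simp
    then have "norm (l2_sqnorm (\<lambda>z. s n z - p z) - 0) < e" if "n \<ge> N" for n
      using that \<open>e > 0\<close> l2_sqnorm_nonneg[of "\<lambda>z. s n z - p z"] by fastforce
    then show "\<exists>N. \<forall>n\<ge>N. norm (l2_sqnorm (\<lambda>z. s n z - p z) - 0) < e" by blast
  qed
  with p that show ?thesis by blast
qed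

lemma fcoef_tendsto_L2:
  assumes s: "\<And>N. L2 (s N)" and p: "L2 p"
    and lim: "(\<lambda>N. l2_sqnorm (\<lambda>z. s N z - p z)) \<longlonglongrightarrow> 0"
  shows "(\<lambda>N. fcoef (s N) m) \<longlonglongrightarrow> fcoef p m"
proof (rule LIM_zero_cancel, rule Lim_null_comparison)
  have "(\<lambda>N. sqrt (l2_sqnorm (\<lambda>z. s N z - p z))) \<longlonglongrightarrow> sqrt 0"
    by (intro tendsto_real_sqrt lim)
  then show "(\<lambda>N. l2_norm (\<lambda>z. s N z - p z)) \<longlonglongrightarrow> 0"
    by (simp add: l2_norm_eq_sqrt)
  show "\<forall>\<^sub>F N in sequentially. norm (fcoef (s N) m - fcoef p m) \<le> l2_norm (\<lambda>z. s N z - p z)"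
    using norm_fcoef_le[OF L2_diff[OF s p]] by (simp add: fcoef_diff[OF s p])
qed

lemma nonneg_partial_sums_Cauchy:
  fixes k :: "complex \<Rightarrow> complex"
  defines "s \<equiv> \<lambda>N::nat. trig_poly (fcoef k) {0..int N}"
  assumes k: "L2 k" and "e > 0"
  shows "\<exists>N. \<forall>i\<ge>N. \<forall>j\<ge>N. l2_sqnorm (\<lambda>z. s i z - s j z) < e"
proof -
  define A where "A N = (\<Sum>n\<in>{0..int N}. (cmod (fcoef k n))\<^sup>2)" for N :: nat
  have diff: "l2_sqnorm (\<lambda>z. s i z - s j z) = A i - A j" if "j \<le> i" for i j
  proof -
    have split: "{0..int i} = {0..int j} \<union> {int j<..int i}" "{0..int j} \<inter> {int j<..int i} = {}"
      using that by auto
    then have "(\<lambda>z. s i z - s j z) = trig_poly (fcoef k) {int j<..int i}"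
      unfolding s_def trig_poly_def by (simp add: sum.union_disjoint fun_eq_iff)
    then show ?thesis
      unfolding A_def using split by (simp add: l2_sqnorm_trig_poly sum.union_disjoint)
  qed
  have "mono A"
    unfolding A_def by (intro monoI sum_mono2) auto
  moreover have "Bseq A"
  proof (rule BseqI'[where K="l2_sqnorm k"])
    show "norm (A N) \<le> l2_sqnorm k" for N
      using bessel_inequality[OF k, of "{0..int N}"] by (simp add: A_def sum_nonneg)
  qed
  ultimately have "Cauchy A"
    by (intro convergent_Cauchy Bseq_monoseq_convergent) (auto simp: monoseq_def mono_def)
  then obtain M where M: "\<forall>i\<ge>M. \<forall>j\<ge>M. norm (A i - A j) < e"
    using CauchyD \<open>e > 0\<close> by blast
  have "l2_sqnorm (\<lambda>z. s i z - s j z) < e" if "i \<ge> M" "j \<ge> M" for i j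
  proof (cases "j \<le> i")
    case True
    then show ?thesis using M[rule_format, OF that] diff[of j i] by simp
  next
    case False
    then have "l2_sqnorm (\<lambda>z. s j z - s i z) < e"
      using M[rule_format, OF that(2,1)] diff[of i j] False by simp
    then show ?thesis
      using l2_sqnorm_commute[of "s i" "s j"] by simp
  qed
  then show ?thesis by blast
qed

lemma Riesz_projection_partial_sums:
  assumes k: "L2 k"
  obtains p where "L2 p" "\<And>m. fcoef p m = (if 0 \<le> m then fcoef k m else 0)"
    "(\<lambda>N. l2_sqnorm (\<lambda>z. trig_poly (fcoef k) {0..int N} z - p z)) \<longlonglongrightarrow> 0"
proof -
  define s where "s N = trig_poly (fcoef k) {0..int N}" for N :: nat
  obtain p where p: "L2 p" and lim: "(\<lambda>N. l2_sqnorm (\<lambda>z. s N z - p z)) \<longlonglongrightarrow> 0"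
    by (rule L2_complete[of s]) (simp_all add: s_def L2_trig_poly nonneg_partial_sums_Cauchy[OF k])
  have "fcoef p m = (if 0 \<le> m then fcoef k m else 0)" for m
  proof (rule LIMSEQ_unique)
    show "(\<lambda>N. fcoef (s N) m) \<longlonglongrightarrow> fcoef p m"
      by (rule fcoef_tendsto_L2[OF _ p lim]) (simp add: s_def L2_trig_poly)
    show "(\<lambda>N. fcoef (s N) m) \<longlonglongrightarrow> (if 0 \<le> m then fcoef k m else 0)"
      by (rule tendsto_eventually, rule eventually_sequentiallyI[of "nat m"])
         (auto simp: s_def fcoef_trig_poly)
  qed
  with p lim that show ?thesis
    unfolding s_def by blast
qed

section \<open>Uniqueness of Fourier coefficients\<close>

definition laurent_poly :: "(complex \<times> int) list \<Rightarrow> complex \<Rightarrow> complex" where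
  "laurent_poly xs z = (\<Sum>(c, n)\<leftarrow>xs. c * z powi n)"

lemma laurent_poly_simps [simp]:
  "laurent_poly [] z = 0"
  "laurent_poly ((c, n) # xs) z = c * z powi n + laurent_poly xs z"
  "laurent_poly (xs @ ys) z = laurent_poly xs z + laurent_poly ys z"
  by (simp_all add: laurent_poly_def)

definition laurent_poly_mult :: "(complex \<times> int) list \<Rightarrow> (complex \<times> int) list \<Rightarrow> (complex \<times> int) list" where
  "laurent_poly_mult xs ys = concat (map (\<lambda>(c, n). map (\<lambda>(d, m). (c * d, n + m)) ys) xs)"

lemma laurent_poly_mult:
  assumes "z \<noteq> 0"
  shows "laurent_poly (laurent_poly_mult xs ys) z = laurent_poly xs z * laurent_poly ys z"
proof -
  have "laurent_poly (map (\<lambda>(d, m). (c * d, n + m)) ys) z = c * z powi n * laurent_poly ys z" for c n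
    using assms by (induction ys) (auto simp: power_int_add algebra_simps)
  then show ?thesis
    by (induction xs) (auto simp: laurent_poly_mult_def algebra_simps)
qed

lemma L2_laurent_poly: "L2 (laurent_poly xs)"
proof (induction xs)
  case Nil
  then show ?case using L2_const[of 0] by (simp add: laurent_poly_def)
next
  case (Cons x xs)
  then show ?case
    using L2_add[OF L2_cmult[OF L2_power_int] Cons]
    by (cases x) (simp add: laurent_poly_def)
qed

lemma integral_mult_laurent_poly_eq_0:
  assumes h: "L2 h" and zero: "\<And>n. fcoef h n = 0"
  shows "integral\<^sup>L circle_measure (\<lambda>z. h z * laurent_poly xs z) = 0"
proof (induction xs)
  case (Cons x xs)
  obtain c n where x: "x = (c, n)" by (cases x)
  have "integral\<^sup>L circle_measure (\<lambda>z. h z * laurent_poly (x # xs) z) =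
    integral\<^sup>L circle_measure (\<lambda>z. c * (h z * z powi n) + h z * laurent_poly xs z)"
    by (simp add: x algebra_simps)
  also have "\<dots> = c * fcoef h (-n) + integral\<^sup>L circle_measure (\<lambda>z. h z * laurent_poly xs z)"
    unfolding fcoef_def
    by (subst Bochner_Integration.integral_add)
       (auto intro!: integrable_mult_right integrable_fcoef integrable_mult_L2 h L2_laurent_poly)
  finally have "integral\<^sup>L circle_measure (\<lambda>z. h z * laurent_poly (x # xs) z) =
    c * fcoef h (-n) + integral\<^sup>L circle_measure (\<lambda>z. h z * laurent_poly xs z)" .
  then show ?case using Cons zero by simp
qed simp

lemma bounded_linear_circle_laurent_poly:
  fixes f :: "complex \<Rightarrow> real"
  defines "a \<equiv> complex_of_real (f 1)" and "b \<equiv> complex_of_real (f \<i>)"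
  assumes "bounded_linear f" and "cmod z = 1"
  shows "complex_of_real (f z) = laurent_poly [((a - \<i> * b) / 2, 1), ((a + \<i> * b) / 2, -1)] z"
proof -
  interpret bounded_linear f by fact
  have "z = Re z *\<^sub>R 1 + Im z *\<^sub>R \<i>"
    by (simp add: complex_eq_iff)
  then have "f z = f (Re z *\<^sub>R 1 + Im z *\<^sub>R \<i>)"
    by simp
  then have f: "f z = Re z * f 1 + Im z * f \<i>"
    by (simp add: add scale)
  have "z powi (-1) = cnj z"
    using cnj_power_int_circle[OF \<open>cmod z = 1\<close>, of 1] by simp
  then have "laurent_poly [((a - \<i> * b) / 2, 1), ((a + \<i> * b) / 2, -1)] z =
    a * ((z + cnj z) / 2) + b * (\<i> * (cnj z - z) / 2)"
    by (simp add: field_simps)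
  also have "\<dots> = complex_of_real (f z)"
    by (simp add: a_def b_def f complex_eq_iff)
  finally show ?thesis
    by simp
qed

lemma real_polynomial_function_circle_laurent_poly:
  fixes q :: "complex \<Rightarrow> real"
  assumes "real_polynomial_function q"
  obtains xs where "\<And>z. cmod z = 1 \<Longrightarrow> complex_of_real (q z) = laurent_poly xs z"
  using assms
proof (induction arbitrary: thesis rule: real_polynomial_function.induct)
  case (linear f)
  then show ?case
    using bounded_linear_circle_laurent_poly[OF linear.hyps] by blast
next
  case (const c)
  show ?case by (rule const.prems[of "[(of_real c, 0)]"]) simp
next
  case (add f g)
  obtain xs ys where "\<And>z. cmod z = 1 \<Longrightarrow> complex_of_real (f z) = laurent_poly xs z"
    "\<And>z. cmod z = 1 \<Longrightarrow> complex_of_real (g z) = laurent_poly ys z"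
    using add.IH by metis
  then show ?case by (intro add.prems[of "xs @ ys"]) simp
next
  case (mult f g)
  obtain xs ys where "\<And>z. cmod z = 1 \<Longrightarrow> complex_of_real (f z) = laurent_poly xs z"
    "\<And>z. cmod z = 1 \<Longrightarrow> complex_of_real (g z) = laurent_poly ys z"
    using mult.IH by metis
  moreover have "z \<noteq> 0" if "cmod z = 1" for z
    using that by auto
  ultimately show ?case
    by (intro mult.prems[of "laurent_poly_mult xs ys"]) (simp add: laurent_poly_mult)
qed

lemma laurent_poly_uniform_approx:
  fixes \<phi> :: "complex \<Rightarrow> real"
  assumes "continuous_on (sphere 0 1) \<phi>" and "e > 0"
  obtains xs where "\<And>z. cmod z = 1 \<Longrightarrow> cmod (of_real (\<phi> z) - laurent_poly xs z) < e"
proof -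
  obtain g where "polynomial_function g" and g: "\<forall>z\<in>sphere 0 1. norm (\<phi> z - g z) < e"
    using Stone_Weierstrass_polynomial_function[OF compact_sphere assms] by blast
  then obtain xs where xs: "\<And>z. cmod z = 1 \<Longrightarrow> complex_of_real (g z) = laurent_poly xs z"
    using real_polynomial_function_circle_laurent_poly by (auto simp: real_polynomial_function_eq)
  have "cmod (of_real (\<phi> z) - laurent_poly xs z) < e" if "cmod z = 1" for z
    using g that xs[OF that, symmetric] by (simp flip: of_real_diff)
  then show ?thesis by (rule that)
qed

lemma norm_integral_mult_le_bound:
  assumes h: "L2 h" and u: "L2 u" and bound: "AE z in circle_measure. cmod (u z) \<le> e"
  shows "cmod (integral\<^sup>L circle_measure (\<lambda>z. h z * u z)) \<le> e * integral\<^sup>L circle_measure (\<lambda>z. cmod (h z))"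
proof -
  have "cmod (integral\<^sup>L circle_measure (\<lambda>z. h z * u z)) \<le> integral\<^sup>L circle_measure (\<lambda>z. cmod (h z * u z))"
    by (rule integral_norm_bound)
  also have "\<dots> \<le> integral\<^sup>L circle_measure (\<lambda>z. e * cmod (h z))"
  proof (rule integral_mono_AE)
    show "integrable circle_measure (\<lambda>z. cmod (h z * u z))"
      by (intro integrable_norm integrable_mult_L2 h u)
    show "integrable circle_measure (\<lambda>z. e * cmod (h z))"
      by (intro integrable_mult_right integrable_norm L2_integrable h)
    show "AE z in circle_measure. cmod (h z * u z) \<le> e * cmod (h z)"
      using bound
    proof eventually_elim
      case (elim z)
      from mult_right_mono[OF elim norm_ge_zero[of "h z"]] show ?case
        by (simp add: norm_mult mult.commute)
    qed
  qed
  finally show ?thesis by simp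
qed

lemma integral_mult_continuous_eq_0:
  fixes \<phi> :: "complex \<Rightarrow> real"
  assumes h: "L2 h" and zero: "\<And>n. fcoef h n = 0"
    and cont: "continuous_on UNIV \<phi>" and bounded: "\<And>z. \<bar>\<phi> z\<bar> \<le> B"
  shows "integral\<^sup>L circle_measure (\<lambda>z. h z * of_real (\<phi> z)) = 0"
proof -
  have [measurable]: "\<phi> \<in> borel_measurable borel"
    using cont by (rule borel_measurable_continuous_onI)
  define I where "I = integral\<^sup>L circle_measure (\<lambda>z. h z * of_real (\<phi> z))"
  define K where "K = integral\<^sup>L circle_measure (\<lambda>z. cmod (h z))"
  have "K \<ge> 0" unfolding K_def by (rule integral_nonneg_AE) simp
  have L2_\<phi>: "L2 (\<lambda>z. of_real (\<phi> z))"
    by (rule L2_bounded[where B=B]) (use bounded in auto)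
  have "cmod I \<le> e * K" if "e > 0" for e
  proof -
    obtain xs where xs: "\<And>z. cmod z = 1 \<Longrightarrow> cmod (of_real (\<phi> z) - laurent_poly xs z) < e"
      using laurent_poly_uniform_approx[OF continuous_on_subset[OF cont subset_UNIV] \<open>e > 0\<close>] by blast
    have "I = integral\<^sup>L circle_measure (\<lambda>z. h z * (of_real (\<phi> z) - laurent_poly xs z))"
      unfolding I_def using integral_mult_laurent_poly_eq_0[OF h zero, of xs]
      by (simp add: right_diff_distrib integrable_mult_L2 h L2_\<phi> L2_laurent_poly)
    also have "cmod \<dots> \<le> e * K"
      unfolding K_def using AE_circle_measure_norm
      by (intro norm_integral_mult_le_bound h L2_diff L2_\<phi> L2_laurent_poly)
         (auto simp: less_imp_le xs elim!: eventually_mono)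
    finally show ?thesis .
  qed
  then have "cmod I \<le> 0 + e" if "e > 0" for e
  proof -
    have "cmod I \<le> e / (K + 1) * K"
      using \<open>K \<ge> 0\<close> that by (intro \<open>\<And>e. e > 0 \<Longrightarrow> cmod I \<le> e * K\<close>) simp
    also have "\<dots> \<le> e"
      using \<open>K \<ge> 0\<close> that by (simp add: field_simps)
    finally show ?thesis by simp
  qed
  then show ?thesis
    using field_le_epsilon[of "cmod I" 0] by (simp add: I_def)
qed

lemma set_integral_closed_eq_0:
  assumes h: "L2 h" and zero: "\<And>n. fcoef h n = 0" and C: "closed C"
  shows "(LINT z:C|circle_measure. h z) = 0"
proof (cases "C = {}")
  case False
  have [measurable]: "h \<in> borel_measurable borel" "C \<in> sets borel"
    using h C by (auto simp: L2_borel_measurable)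
  define \<phi> where "\<phi> k z = max 0 (1 - real k * infdist z C)" for k :: nat and z
  have cont: "continuous_on UNIV (\<phi> k)" for k
    unfolding \<phi>_def by (intro continuous_intros)
  have bounded: "\<bar>\<phi> k z\<bar> \<le> 1" for k z
    unfolding \<phi>_def using infdist_nonneg[of z C] by auto
  have [measurable]: "\<phi> k \<in> borel_measurable borel" for k
    using cont by (rule borel_measurable_continuous_onI)
  have lim: "(\<lambda>k. h z * of_real (\<phi> k z)) \<longlonglongrightarrow> indicator C z *\<^sub>R h z" for z
  proof (cases "z \<in> C")
    case True
    then have "\<phi> k z = 1" for k
      using in_closed_iff_infdist_zero[OF C False] by (simp add: \<phi>_def)
    then show ?thesis using True by simp
  next
    case False
    have "infdist z C > 0"
      using infdist_pos_not_in_closed[OF C \<open>C \<noteq> {}\<close> False] .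
    then have "h z * of_real (\<phi> k z) = indicator C z *\<^sub>R h z" if "nat \<lceil>1 / infdist z C\<rceil> \<le> k" for k
      using that False by (simp add: \<phi>_def field_simps)
    then show ?thesis
      by (intro tendsto_eventually eventually_sequentiallyI)
  qed
  have "(\<lambda>k. integral\<^sup>L circle_measure (\<lambda>z. h z * of_real (\<phi> k z))) \<longlonglongrightarrow> (LINT z:C|circle_measure. h z)"
    unfolding set_lebesgue_integral_def
  proof (rule integral_dominated_convergence[where w="\<lambda>z. cmod (h z)"])
    show "integrable circle_measure (\<lambda>z. cmod (h z))"
      using L2_integrable[OF h] by (rule integrable_norm)
    show "AE z in circle_measure. norm (h z * of_real (\<phi> k z)) \<le> cmod (h z)" for k
      using mult_left_mono[OF bounded[of k] norm_ge_zero] by (intro AE_I2) (simp add: norm_mult)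
  qed (use lim in auto)
  then have "(\<lambda>k. 0) \<longlonglongrightarrow> (LINT z:C|circle_measure. h z)"
    by (simp add: integral_mult_continuous_eq_0[OF h zero cont bounded])
  then show ?thesis
    using LIMSEQ_unique[OF tendsto_const] by metis
qed (simp add: set_lebesgue_integral_def)

lemma AE_zero_if_fcoef_zero:
  assumes h: "L2 h" and zero: "\<And>n. fcoef h n = 0"
  shows "AE z in circle_measure. h z = 0"
proof (rule circle.density_zero)
  show "integrable circle_measure h"
    using h by (rule L2_integrable)
  have [measurable]: "h \<in> borel_measurable borel"
    using h by (rule L2_borel_measurable)
  have set_integrable: "set_integrable circle_measure A h" if "A \<in> sets borel" for A
    unfolding set_integrable_def using that by (intro integrable_mult_indicator L2_integrable h) auto
  fix A assume "A \<in> sets circle_measure"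
  then have "Int_stable (Collect closed)" "Collect closed \<subseteq> Pow UNIV"
    and "A \<in> sigma_sets UNIV (Collect closed)"
    by (auto simp: Int_stable_def borel_eq_closed)
  then show "(LINT z:A|circle_measure. h z) = 0"
  proof (induction rule: sigma_sets_induct_disjoint)
    case (basic A)
    then show ?case using set_integral_closed_eq_0[OF h zero] by simp
  next
    case (compl A)
    then have "A \<in> sets borel"
      by (simp add: borel_eq_closed)
    then have "(LINT z:A \<union> (UNIV - A)|circle_measure. h z) =
      (LINT z:A|circle_measure. h z) + (LINT z:UNIV - A|circle_measure. h z)"
      by (intro set_integral_Un set_integrable) auto
    then show ?case
      using compl.IH set_integral_closed_eq_0[OF h zero closed_UNIV] by simp
  next
    case (union A)
    then have "A i \<in> sets borel" for i
      by (auto simp: borel_eq_closed)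
    then have "(LINT z:(\<Union>i. A i)|circle_measure. h z) = (\<Sum>i. LINT z:A i|circle_measure. h z)"
      using union.hyps(1) set_integrable[of "\<Union>i. A i"]
      by (intro lebesgue_integral_countable_add) (auto simp: disjoint_family_on_def)
    then show ?case
      by (simp add: union.IH)
  qed (simp add: set_lebesgue_integral_def)
qed

lemma AE_eq_if_fcoef_eq:
  assumes "L2 a" "L2 b" "\<And>n. fcoef a n = fcoef b n"
  shows "AE z in circle_measure. a z = b z"
  using AE_zero_if_fcoef_zero[of "\<lambda>z. a z - b z"] assms by (simp add: L2_diff fcoef_diff)

section \<open>The projections \<open>P\<close> and \<open>P\<^sup>\<bottom>\<close>\<close>

lemma Pproj_spec:
  assumes "P_exists h"
  shows "L2 (Pproj h) \<and> (\<forall>n. fcoef (Pproj h) n = (if 0 \<le> n then fcoef h n else 0))"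
  using assms unfolding P_exists_def Pproj_def by (rule someI_ex)

lemma P_exists_L2: "L2 k \<Longrightarrow> P_exists k"
  unfolding P_exists_def by (metis Riesz_projection_partial_sums)

lemma Pproj_unique:
  assumes p: "L2 p" and coef: "\<And>n. fcoef p n = (if 0 \<le> n then fcoef h n else 0)"
  shows "P_exists h" and "AE z in circle_measure. Pproj h z = p z"
proof -
  show "P_exists h"
    unfolding P_exists_def using assms by blast
  from Pproj_spec[OF this] show "AE z in circle_measure. Pproj h z = p z"
    using AE_eq_if_fcoef_eq[OF _ p] coef by auto
qed

lemma fcoef_Pperp:
  assumes "L2 k"
  shows "L2 (Pperp k)" and "fcoef (Pperp k) n = (if n < 0 then fcoef k n else 0)"
  using Pproj_spec[OF P_exists_L2[OF assms]] assms by (auto simp: Pperp_def L2_diff fcoef_diff)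

lemma l2_inner_eq_0_if_H2:
  assumes r: "L2 r" and r_coef: "\<And>n. 0 \<le> n \<Longrightarrow> fcoef r n = 0" and h: "H2 h"
  shows "l2_inner r h = 0"
proof -
  have h_L2: "L2 h" and h_coef: "\<And>n. n < 0 \<Longrightarrow> fcoef h n = 0"
    using h by (auto simp: H2_def)
  define S where "S N = trig_poly (fcoef h) {0..int N}" for N :: nat
  have S: "L2 (S N)" for N
    unfolding S_def by (rule L2_trig_poly)
  obtain p where p: "L2 p" and p_coef: "\<And>m. fcoef p m = (if 0 \<le> m then fcoef h m else 0)"
    and lim: "(\<lambda>N. l2_sqnorm (\<lambda>z. S N z - p z)) \<longlonglongrightarrow> 0"
    using Riesz_projection_partial_sums[OF h_L2] unfolding S_def by blast
  have "AE z in circle_measure. p z = h z"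
    using AE_eq_if_fcoef_eq[OF p h_L2] p_coef h_coef by (simp add: not_le)
  then have "AE z in circle_measure. cmod (h z - S N z) = cmod (S N z - p z)" for N
    by eventually_elim (simp add: norm_minus_commute)
  then have dist: "l2_norm (\<lambda>z. h z - S N z) = sqrt (l2_sqnorm (\<lambda>z. S N z - p z))" for N
    using l2_sqnorm_cong_AE S h_L2 p by (simp add: l2_norm_eq_sqrt L2_diff)
  have "cmod (l2_inner r h) \<le> l2_norm r * sqrt (l2_sqnorm (\<lambda>z. S N z - p z))" for N
  proof -
    have "l2_inner r (S N) = 0"
      unfolding S_def using r by (simp add: l2_inner_trig_poly r_coef)
    then have "l2_inner r h = l2_inner r (\<lambda>z. h z - S N z)"
      by (simp add: l2_inner_diff_right r h_L2 S)
    also have "cmod \<dots> \<le> l2_norm r * l2_norm (\<lambda>z. cnj (h z - S N z))"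
      unfolding l2_inner_def by (rule norm_integral_mult_le[OF r L2_cnj[OF L2_diff[OF h_L2 S]]])
    finally show ?thesis
      by (simp only: l2_norm_cnj dist)
  qed
  moreover have "(\<lambda>N. l2_norm r * sqrt (l2_sqnorm (\<lambda>z. S N z - p z))) \<longlonglongrightarrow> l2_norm r * sqrt 0"
    by (intro tendsto_intros lim)
  ultimately have "cmod (l2_inner r h) \<le> l2_norm r * sqrt 0"
    by (intro LIMSEQ_le_const) auto
  then show ?thesis by simp
qed

lemma H2_mult_power_int: "H2 g \<Longrightarrow> 0 \<le> n \<Longrightarrow> H2 (\<lambda>z. g z * z powi n)"
  by (simp add: H2_def fcoef_mult_power_int L2_mult_power_int)

lemma fcoef_cnj_mult_Pproj:
  assumes a: "L2 a" and g: "H2 g" and "0 \<le> n"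
  shows "fcoef (\<lambda>z. cnj (g z) * Pproj a z) n = l2_inner a (\<lambda>z. g z * z powi n)"
proof -
  have Pa: "L2 (Pproj a)" and Pa_coef: "\<And>m. fcoef (Pproj a) m = (if 0 \<le> m then fcoef a m else 0)"
    using Pproj_spec[OF P_exists_L2[OF a]] by auto
  have g_L2: "L2 g" and G: "L2 (\<lambda>z. g z * z powi n)"
    using g by (auto simp: H2_def L2_mult_power_int)
  have [measurable]: "g \<in> borel_measurable borel" "Pproj a \<in> borel_measurable borel"
    using g_L2 Pa by (auto simp: L2_borel_measurable)
  have "fcoef (\<lambda>z. cnj (g z) * Pproj a z) n = l2_inner (Pproj a) (\<lambda>z. g z * z powi n)"
    unfolding fcoef_def l2_inner_def
    by (rule integral_cong_AE)
       (use AE_circle_measure_norm in \<open>auto simp: cnj_power_int_circle mult_ac elim!: eventually_mono\<close>)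
  also have "l2_inner (\<lambda>z. Pproj a z - a z) (\<lambda>z. g z * z powi n) = 0"
    using Pa_coef a Pa g \<open>0 \<le> n\<close>
    by (intro l2_inner_eq_0_if_H2 L2_diff H2_mult_power_int) (auto simp: fcoef_diff)
  then have "l2_inner (Pproj a) (\<lambda>z. g z * z powi n) = l2_inner a (\<lambda>z. g z * z powi n)"
    by (simp add: l2_inner_diff_left Pa a G)
  finally show ?thesis .
qed

lemma fcoef_cnj_times_z:
  assumes "L2 q"
  shows "fcoef (\<lambda>z. cnj z * cnj (q z)) n = cnj (fcoef q (-(n+1)))"
proof -
  have [measurable]: "q \<in> borel_measurable borel"
    using assms by (rule L2_borel_measurable)
  have "cnj z * cnj w * z powi (-n) = cnj (w * z powi (n + 1))" if "cmod z = 1" for z w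
  proof -
    have "z \<noteq> 0" using that by auto
    then have "cnj (w * z powi (n + 1)) = cnj w * cnj z powi n * cnj z"
      by (simp add: power_int_add mult_ac)
    then show ?thesis
      by (simp only: cnj_power_int_circle[OF that] mult_ac)
  qed
  then have "fcoef (\<lambda>z. cnj z * cnj (q z)) n = integral\<^sup>L circle_measure (\<lambda>z. cnj (q z * z powi (n + 1)))"
    unfolding fcoef_def
    by (intro integral_cong_AE) (use AE_circle_measure_norm in \<open>auto elim!: eventually_mono\<close>)
  also have "\<dots> = cnj (fcoef q (-(n+1)))"
    unfolding fcoef_def by (simp only: Bochner_Integration.integral_cnj minus_minus)
  finally show ?thesis .
qed

lemma Pproj_cnj_mult_Pproj:
  assumes a: "L2 a" and g: "H2 g" and k: "L2 k"
    and rel: "AE z in circle_measure. a z * cnj (g z) = cnj z * cnj (k z)"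
  shows "P_exists (\<lambda>z. cnj (g z) * Pproj a z)"
    and "l2_norm (Pproj (\<lambda>z. cnj (g z) * Pproj a z)) = l2_norm (Pperp k)"
proof -
  define p where "p z = cnj z * cnj (Pperp k z)" for z
  have q: "L2 (Pperp k)"
    using fcoef_Pperp(1)[OF k] .
  have [measurable]: "a \<in> borel_measurable borel" "k \<in> borel_measurable borel" "g \<in> borel_measurable borel"
    using a k g by (auto simp: H2_def L2_borel_measurable)
  have p: "L2 p"
    unfolding p_def
    by (rule L2_mult_bounded[OF L2_cnj[OF q], where B=1])
       (use AE_circle_measure_norm in \<open>auto elim!: eventually_mono\<close>)
  have "fcoef (\<lambda>z. cnj (g z) * Pproj a z) n = cnj (fcoef k (-(n+1)))" if "0 \<le> n" for n
  proof -
    have "fcoef (\<lambda>z. cnj (g z) * Pproj a z) n = l2_inner a (\<lambda>z. g z * z powi n)"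
      by (rule fcoef_cnj_mult_Pproj[OF a g that])
    also have "\<dots> = fcoef (\<lambda>z. cnj z * cnj (k z)) n"
      unfolding l2_inner_def fcoef_def
    proof (rule integral_cong_AE)
      show "AE z in circle_measure. a z * cnj (g z * z powi n) = cnj z * cnj (k z) * z powi - n"
        using rel AE_circle_measure_norm
        by eventually_elim (simp add: cnj_power_int_circle mult.assoc[symmetric])
    qed simp_all
    also have "\<dots> = cnj (fcoef k (-(n+1)))"
      by (rule fcoef_cnj_times_z[OF k])
    finally show ?thesis .
  qed
  then have "fcoef p n = (if 0 \<le> n then fcoef (\<lambda>z. cnj (g z) * Pproj a z) n else 0)" for n
    unfolding p_def using fcoef_cnj_times_z[OF q] fcoef_Pperp(2)[OF k] by simp
  note Pp = Pproj_unique[OF p this]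
  show "P_exists (\<lambda>z. cnj (g z) * Pproj a z)"
    by (rule Pp(1))
  have "AE z in circle_measure. cmod (Pproj (\<lambda>z. cnj (g z) * Pproj a z) z) = cmod (Pperp k z)"
    using Pp(2) AE_circle_measure_norm by eventually_elim (simp add: p_def norm_mult)
  then have "l2_sqnorm (Pproj (\<lambda>z. cnj (g z) * Pproj a z)) = l2_sqnorm (Pperp k)"
    using Pproj_spec[OF Pp(1)] q by (intro l2_sqnorm_cong_AE) auto
  then show "l2_norm (Pproj (\<lambda>z. cnj (g z) * Pproj a z)) = l2_norm (Pperp k)"
    by (simp add: l2_norm_eq_sqrt)
qed

section \<open>Bounded analytic and inner functions\<close>

lemma Hinf_borel_measurable: "Hinf f \<Longrightarrow> f \<in> borel_measurable borel"
  by (simp add: Hinf_def)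

lemma Hinf_AE_bounded:
  assumes "Hinf f"
  obtains B where "AE z in circle_measure. cmod (f z) \<le> B"
proof -
  obtain F where "bounded (F ` ball 0 1)" and radial: "radial_bv F f"
    using assms by (auto simp: Hinf_def)
  then obtain B where B: "\<forall>w\<in>ball 0 1. cmod (F w) \<le> B"
    by (auto simp: bounded_iff)
  have "AE z in circle_measure. cmod (f z) \<le> B"
    using radial[unfolded radial_bv_def] AE_circle_measure_norm
  proof eventually_elim
    case (elim z)
    then have "cmod z = 1" by simp
    have "eventually (\<lambda>r::real. r \<in> {0<..<1}) (at_left 1)"
      by (rule eventually_at_left_real) simp
    then have "eventually (\<lambda>r::real. cmod (F (of_real r * z)) \<le> B) (at_left 1)"
    proof eventually_elim
      case (elim r)
      then have "of_real r * z \<in> ball 0 1"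
        using \<open>cmod z = 1\<close> by (simp add: norm_mult)
      then show ?case using B by blast
    qed
    with tendsto_norm[OF elim(1)] show ?case
      by (rule tendsto_upperbound) simp
  qed
  then show ?thesis by (rule that)
qed

lemma fstar_AE_bounded:
  assumes "Hinf f"
  obtains B where "AE z in circle_measure. cmod (fstar f z) \<le> B"
proof -
  obtain B where "AE z in circle_measure. cmod (f z) \<le> B"
    using Hinf_AE_bounded[OF assms] .
  from AE_circle_measure_cnj[OF this] show ?thesis
    by (intro that[of B]) (simp add: fstar_def)
qed

lemma borel_measurable_fstar:
  assumes "Hinf f"
  shows "fstar f \<in> borel_measurable borel"
proof -
  have [measurable]: "f \<in> borel_measurable borel"
    using assms by (rule Hinf_borel_measurable)
  show ?thesis
    unfolding fstar_def by measurable
qed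

lemma L2_mult_Uop:
  assumes "inner_fun \<theta>" and "Hinf f"
  shows "L2 (\<lambda>z. \<theta> z * Uop f z)"
proof -
  have [measurable]: "\<theta> \<in> borel_measurable borel" "f \<in> borel_measurable borel"
    using assms by (auto simp: inner_fun_def Hinf_borel_measurable)
  obtain B where "AE z in circle_measure. cmod (fstar f z) \<le> B"
    using fstar_AE_bounded[OF assms(2)] .
  moreover have "AE z in circle_measure. cmod (\<theta> z) = 1"
    using assms(1) by (simp add: inner_fun_def)
  ultimately have "AE z in circle_measure. cmod (\<theta> z * Uop f z) \<le> B"
    using AE_circle_measure_norm by eventually_elim (simp add: Uop_def fstar_def norm_mult)
  then show ?thesis
    by (rule L2_bounded[rotated]) (simp add: Uop_def)
qed

lemma L2_mult_fstar:
  assumes "inner_fun \<theta>" and "H2 g" and "Hinf f"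
  shows "L2 (\<lambda>z. cnj (\<theta> z) * g z * fstar f z)"
proof -
  have [measurable]: "\<theta> \<in> borel_measurable borel" "fstar f \<in> borel_measurable borel"
    using assms by (auto simp: inner_fun_def Hinf_borel_measurable borel_measurable_fstar)
  obtain B where "AE z in circle_measure. cmod (fstar f z) \<le> B"
    using fstar_AE_bounded[OF assms(3)] .
  then have "AE z in circle_measure. cmod (cnj (\<theta> z) * fstar f z) \<le> B"
    using assms(1) by (auto simp: inner_fun_def norm_mult elim!: eventually_elim2)
  from L2_mult_bounded[OF _ _ this] assms(2) show ?thesis
    by (simp add: H2_def mult_ac)
qed

theorem lemma2p3:
  fixes \<theta> g f :: "complex \<Rightarrow> complex"
  assumes "inner_fun \<theta>" and "H2 g" and "Hinf f"
  shows "P_exists (\<lambda>z. cnj (g z) * Vop \<theta> (Uop f) z) \<and>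
         l2_norm (Pproj (\<lambda>z. cnj (g z) * Vop \<theta> (Uop f) z)) =
         l2_norm (Pperp (\<lambda>z. cnj (\<theta> z) * g z * fstar f z))"
proof -
  have "\<theta> z * Uop f z * cnj (g z) = cnj z * cnj (cnj (\<theta> z) * g z * fstar f z)" for z
    by (simp add: Uop_def fstar_def)
  then show ?thesis
    using Pproj_cnj_mult_Pproj[OF L2_mult_Uop[OF assms(1,3)] assms(2) L2_mult_fstar[OF assms]]
    unfolding Vop_def by simp
qed

end
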